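(* Assume $D_i>0$ for all $i\in\mathcal D$. Then all minimum-delay equilibrium solutions of the instance have the same vector of delays $(\delta_i)_{i\in\mathcal D}$, where $\delta_i=\min_{j}(\ell_{ij}+\beta_j)$.
   Context: An instance consists of finite sets $\mathcal D$ (demand nodes) and $\mathcal F$ (FCs), finite nonnegative travel times $\ell_{ij}$, demands $D_i\ge0$ and capacities $C_j\ge0$ with $\sum_iD_i\le\sum_jC_j$. An assignment is $x\in\mathbb R_{\ge0}^{\mathcal D\times\mathcal F}$ with $\sum_jx_{ij}=D_i$ for all $i$ and $\sum_ix_{ij}\le C_j$ for all $j$. An equilibrium solution is a pair $(x,\beta)$ with $x$ an assignment and $\beta\in\mathbb R^{\mathcal F}_{\ge0}$ such that $x_{ij}>0$ only if $j\in\arg\min_{j'}(\ell_{ij'}+\beta_{j'})$, and $\beta_j=0$ whenever $\sum_ix_{ij}<C_j$. The delay of demand $i$ is $\delta_i=\min_j(\ell_{ij}+\beta_j)$; the delay of the solution is $\sum_iD_i\delta_i$, and a minimum-delay equilibrium solution minimizes this over all equilibrium solutions. *)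

theory Defs
  imports Main "HOL-Analysis.Analysis"
begin

text \<open>An instance: finite demand set Dn, finite FC set Fc, travel times l,
 demands Dem, capacities Cap.  Assignments are functions x :: 'd \<Rightarrow> 'f \<Rightarrow> real,
 only their values on Dn \<times> Fc matter.\<close>

definition instance_ok ::
  "'d set \<Rightarrow> 'f set \<Rightarrow> ('d \<Rightarrow> 'f \<Rightarrow> real) \<Rightarrow> ('d \<Rightarrow> real) \<Rightarrow> ('f \<Rightarrow> real) \<Rightarrow> bool" where
  "instance_ok Dn Fc l Dem Cap \<longleftrightarrow>
     finite Dn \<and> finite Fc \<and>
     (\<forall>i\<in>Dn. \<forall>j\<in>Fc. l i j \<ge> 0) \<and>
     (\<forall>i\<in>Dn. Dem i \<ge> 0) \<and> (\<forall>j\<in>Fc. Cap j \<ge> 0) \<and>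
     (\<Sum>i\<in>Dn. Dem i) \<le> (\<Sum>j\<in>Fc. Cap j)"

definition assignment ::
  "'d set \<Rightarrow> 'f set \<Rightarrow> ('d \<Rightarrow> real) \<Rightarrow> ('f \<Rightarrow> real) \<Rightarrow> ('d \<Rightarrow> 'f \<Rightarrow> real) \<Rightarrow> bool" where
  "assignment Dn Fc Dem Cap x \<longleftrightarrow>
     (\<forall>i\<in>Dn. \<forall>j\<in>Fc. x i j \<ge> 0) \<and>
     (\<forall>i\<in>Dn. (\<Sum>j\<in>Fc. x i j) = Dem i) \<and>
     (\<forall>j\<in>Fc. (\<Sum>i\<in>Dn. x i j) \<le> Cap j)"

definition node_delay :: "'f set \<Rightarrow> ('d \<Rightarrow> 'f \<Rightarrow> real) \<Rightarrow> ('f \<Rightarrow> real) \<Rightarrow> 'd \<Rightarrow> real" where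
  "node_delay Fc l \<beta> i = Min ((\<lambda>j. l i j + \<beta> j) ` Fc)"

definition equilibrium ::
  "'d set \<Rightarrow> 'f set \<Rightarrow> ('d \<Rightarrow> 'f \<Rightarrow> real) \<Rightarrow> ('d \<Rightarrow> real) \<Rightarrow> ('f \<Rightarrow> real)
     \<Rightarrow> ('d \<Rightarrow> 'f \<Rightarrow> real) \<Rightarrow> ('f \<Rightarrow> real) \<Rightarrow> bool" where
  "equilibrium Dn Fc l Dem Cap x \<beta> \<longleftrightarrow>
     assignment Dn Fc Dem Cap x \<and>
     (\<forall>j\<in>Fc. \<beta> j \<ge> 0) \<and>
     (\<forall>i\<in>Dn. \<forall>j\<in>Fc. x i j > 0 \<longrightarrow> (\<forall>j'\<in>Fc. l i j + \<beta> j \<le> l i j' + \<beta> j')) \<and>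
     (\<forall>j\<in>Fc. (\<Sum>i\<in>Dn. x i j) < Cap j \<longrightarrow> \<beta> j = 0)"

definition total_delay ::
  "'d set \<Rightarrow> 'f set \<Rightarrow> ('d \<Rightarrow> 'f \<Rightarrow> real) \<Rightarrow> ('d \<Rightarrow> real) \<Rightarrow> ('f \<Rightarrow> real) \<Rightarrow> real" where
  "total_delay Dn Fc l Dem \<beta> = (\<Sum>i\<in>Dn. Dem i * node_delay Fc l \<beta> i)"

definition min_delay_equilibrium ::
  "'d set \<Rightarrow> 'f set \<Rightarrow> ('d \<Rightarrow> 'f \<Rightarrow> real) \<Rightarrow> ('d \<Rightarrow> real) \<Rightarrow> ('f \<Rightarrow> real)
     \<Rightarrow> ('d \<Rightarrow> 'f \<Rightarrow> real) \<Rightarrow> ('f \<Rightarrow> real) \<Rightarrow> bool" where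
  "min_delay_equilibrium Dn Fc l Dem Cap x \<beta> \<longleftrightarrow>
     equilibrium Dn Fc l Dem Cap x \<beta> \<and>
     (\<forall>x' \<beta>'. equilibrium Dn Fc l Dem Cap x' \<beta>' \<longrightarrow>
        total_delay Dn Fc l Dem \<beta> \<le> total_delay Dn Fc l Dem \<beta>')"

end

theory Submission
  imports Defs
begin

text \<open>Equilibria are exactly the pairs satisfying complementary slackness for the
  transportation LP and its dual with prices \<open>\<beta>\<close>. The slackness gap \<open>G(x, \<beta>)\<close> is
  nonnegative, vanishes exactly at equilibria, and splits as (cost of \<open>x\<close>) minus
  (dual value of \<open>\<beta>\<close>). Hence \<open>G(x\<^sub>1, \<beta>\<^sub>2) + G(x\<^sub>2, \<beta>\<^sub>1) = G(x\<^sub>1, \<beta>\<^sub>1) + G(x\<^sub>2, \<beta>\<^sub>2) = 0\<close>,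
  so prices of equilibria can be exchanged, and then the pointwise minimum
  \<open>\<beta>\<^sub>3 = min \<beta>\<^sub>1 \<beta>\<^sub>2\<close> is again an equilibrium price with \<open>x\<^sub>1\<close>. Delays are monotone
  in the prices, so \<open>\<delta>(\<beta>\<^sub>3) \<le> \<delta>(\<beta>\<^sub>k)\<close> pointwise; minimality of the total delay
  together with \<open>D\<^sub>i > 0\<close> forces equality at every demand node.\<close>

definition slackness_gap :: "'d set \<Rightarrow> 'f set \<Rightarrow> ('d \<Rightarrow> 'f \<Rightarrow> real) \<Rightarrow> ('f \<Rightarrow> real)
     \<Rightarrow> ('d \<Rightarrow> 'f \<Rightarrow> real) \<Rightarrow> ('f \<Rightarrow> real) \<Rightarrow> real" where
  "slackness_gap Dn Fc l Cap x \<beta> =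
    (\<Sum>i\<in>Dn. \<Sum>j\<in>Fc. (l i j + \<beta> j - node_delay Fc l \<beta> i) * x i j)
    + (\<Sum>j\<in>Fc. \<beta> j * (Cap j - (\<Sum>i\<in>Dn. x i j)))"

lemma node_delay_le:
  assumes "finite Fc" "j \<in> Fc"
  shows "node_delay Fc l \<beta> i \<le> l i j + \<beta> j"
  unfolding node_delay_def using assms by (intro Min_le) auto

lemma node_delay_attained:
  assumes "finite Fc" "Fc \<noteq> {}"
  obtains j where "j \<in> Fc" "node_delay Fc l \<beta> i = l i j + \<beta> j"
proof -
  have "Min ((\<lambda>j. l i j + \<beta> j) ` Fc) \<in> (\<lambda>j. l i j + \<beta> j) ` Fc"
    using assms by (intro Min_in) auto
  then show ?thesis using that unfolding node_delay_def by auto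
qed

lemma node_delay_eq_iff:
  assumes "finite Fc" "j \<in> Fc"
  shows "node_delay Fc l \<beta> i = l i j + \<beta> j \<longleftrightarrow> (\<forall>j'\<in>Fc. l i j + \<beta> j \<le> l i j' + \<beta> j')"
  unfolding node_delay_def using assms by (subst Min_eq_iff) auto

lemma node_delay_mono:
  assumes "finite Fc" "\<forall>j\<in>Fc. \<beta> j \<le> \<beta>' j"
  shows "node_delay Fc l \<beta> i \<le> node_delay Fc l \<beta>' i"
proof (cases "Fc = {}")
  case True
  then show ?thesis by (simp add: node_delay_def)
next
  case False
  obtain j where "j \<in> Fc" "node_delay Fc l \<beta>' i = l i j + \<beta>' j"
    by (rule node_delay_attained[OF assms(1) False])
  then show ?thesis using node_delay_le[OF assms(1), of j l \<beta> i] assms(2) by force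
qed

lemma slackness_gap_primal_dual:
  assumes "assignment Dn Fc Dem Cap x"
  shows "slackness_gap Dn Fc l Cap x \<beta> =
     (\<Sum>i\<in>Dn. \<Sum>j\<in>Fc. l i j * x i j) - (total_delay Dn Fc l Dem \<beta> - (\<Sum>j\<in>Fc. Cap j * \<beta> j))"
proof -
  have demand: "(\<Sum>j\<in>Fc. x i j) = Dem i" if "i \<in> Dn" for i
    using assms that unfolding assignment_def by auto
  have "(\<Sum>i\<in>Dn. \<Sum>j\<in>Fc. (l i j + \<beta> j - node_delay Fc l \<beta> i) * x i j)
      = (\<Sum>i\<in>Dn. \<Sum>j\<in>Fc. l i j * x i j) + (\<Sum>i\<in>Dn. \<Sum>j\<in>Fc. \<beta> j * x i j)
        - (\<Sum>i\<in>Dn. node_delay Fc l \<beta> i * (\<Sum>j\<in>Fc. x i j))"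
    by (simp add: ring_distribs sum.distrib sum_subtractf sum_distrib_left)
  also have "(\<Sum>i\<in>Dn. node_delay Fc l \<beta> i * (\<Sum>j\<in>Fc. x i j)) = total_delay Dn Fc l Dem \<beta>"
    unfolding total_delay_def by (intro sum.cong) (auto simp: demand)
  also have "(\<Sum>i\<in>Dn. \<Sum>j\<in>Fc. \<beta> j * x i j) = (\<Sum>j\<in>Fc. \<beta> j * (\<Sum>i\<in>Dn. x i j))"
    by (subst sum.swap) (simp add: sum_distrib_left)
  finally show ?thesis unfolding slackness_gap_def
    by (simp add: algebra_simps sum.distrib sum_subtractf)
qed

lemma slackness_gap_terms_nonneg:
  assumes "finite Fc" "assignment Dn Fc Dem Cap x" "\<forall>j\<in>Fc. \<beta> j \<ge> 0"
  shows "\<And>i j. i \<in> Dn \<Longrightarrow> j \<in> Fc \<Longrightarrow> 0 \<le> (l i j + \<beta> j - node_delay Fc l \<beta> i) * x i j"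
    and "\<And>j. j \<in> Fc \<Longrightarrow> 0 \<le> \<beta> j * (Cap j - (\<Sum>i\<in>Dn. x i j))"
  using assms node_delay_le[OF assms(1), of _ l \<beta>] unfolding assignment_def by auto

lemma slackness_gap_nonneg:
  assumes "finite Fc" "assignment Dn Fc Dem Cap x" "\<forall>j\<in>Fc. \<beta> j \<ge> 0"
  shows "slackness_gap Dn Fc l Cap x \<beta> \<ge> 0"
  unfolding slackness_gap_def using slackness_gap_terms_nonneg[OF assms]
  by (simp add: sum_nonneg add_nonneg_nonneg)

lemma slackness_gap_eq_0_iff:
  assumes "finite Dn" "finite Fc" "assignment Dn Fc Dem Cap x" "\<forall>j\<in>Fc. \<beta> j \<ge> 0"
  shows "slackness_gap Dn Fc l Cap x \<beta> = 0 \<longleftrightarrow>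
      (\<forall>i\<in>Dn. \<forall>j\<in>Fc. (l i j + \<beta> j - node_delay Fc l \<beta> i) * x i j = 0) \<and>
      (\<forall>j\<in>Fc. \<beta> j * (Cap j - (\<Sum>i\<in>Dn. x i j)) = 0)"
  unfolding slackness_gap_def using slackness_gap_terms_nonneg[OF assms(2-4)]
  by (simp add: add_nonneg_eq_0_iff sum_nonneg sum_nonneg_eq_0_iff assms(1,2))

lemma equilibrium_iff_slackness_gap_eq_0:
  assumes "finite Dn" "finite Fc" "assignment Dn Fc Dem Cap x" "\<forall>j\<in>Fc. \<beta> j \<ge> 0"
  shows "equilibrium Dn Fc l Dem Cap x \<beta> \<longleftrightarrow> slackness_gap Dn Fc l Cap x \<beta> = 0"
proof -
  have route: "(l i j + \<beta> j - node_delay Fc l \<beta> i) * x i j = 0 \<longleftrightarrow>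
      (x i j > 0 \<longrightarrow> (\<forall>j'\<in>Fc. l i j + \<beta> j \<le> l i j' + \<beta> j'))"
    if "i \<in> Dn" "j \<in> Fc" for i j
  proof -
    have "x i j \<ge> 0" using assms(3) that unfolding assignment_def by auto
    then have "(l i j + \<beta> j - node_delay Fc l \<beta> i) * x i j = 0 \<longleftrightarrow>
        (x i j > 0 \<longrightarrow> node_delay Fc l \<beta> i = l i j + \<beta> j)"
      by auto
    then show ?thesis by (simp add: node_delay_eq_iff[OF assms(2) that(2)])
  qed
  have capacity: "\<beta> j * (Cap j - (\<Sum>i\<in>Dn. x i j)) = 0 \<longleftrightarrow>
      ((\<Sum>i\<in>Dn. x i j) < Cap j \<longrightarrow> \<beta> j = 0)"
    if "j \<in> Fc" for j
    using assms(3) that unfolding assignment_def by force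
  have "slackness_gap Dn Fc l Cap x \<beta> = 0 \<longleftrightarrow>
      (\<forall>i\<in>Dn. \<forall>j\<in>Fc. x i j > 0 \<longrightarrow> (\<forall>j'\<in>Fc. l i j + \<beta> j \<le> l i j' + \<beta> j')) \<and>
      (\<forall>j\<in>Fc. (\<Sum>i\<in>Dn. x i j) < Cap j \<longrightarrow> \<beta> j = 0)"
    unfolding slackness_gap_eq_0_iff[OF assms] by (simp only: route capacity cong: ball_cong)
  then show ?thesis using assms(3,4) unfolding equilibrium_def by blast
qed

lemma equilibrium_exchange_prices:
  assumes "finite Dn" "finite Fc"
    and "equilibrium Dn Fc l Dem Cap x1 \<beta>1" "equilibrium Dn Fc l Dem Cap x2 \<beta>2"
  shows "equilibrium Dn Fc l Dem Cap x1 \<beta>2"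
proof -
  have x: "assignment Dn Fc Dem Cap x1" "assignment Dn Fc Dem Cap x2"
    and \<beta>: "\<forall>j\<in>Fc. \<beta>1 j \<ge> 0" "\<forall>j\<in>Fc. \<beta>2 j \<ge> 0"
    using assms(3,4) unfolding equilibrium_def by blast+
  note gap_zero = equilibrium_iff_slackness_gap_eq_0[OF assms(1,2)]
  note gap_nonneg = slackness_gap_nonneg[OF assms(2), where l = l]
  \<comment> \<open>the gap is primal minus dual, so the cross gaps sum to the diagonal ones\<close>
  have "slackness_gap Dn Fc l Cap x1 \<beta>2 + slackness_gap Dn Fc l Cap x2 \<beta>1
      = slackness_gap Dn Fc l Cap x1 \<beta>1 + slackness_gap Dn Fc l Cap x2 \<beta>2"
    by (simp add: slackness_gap_primal_dual[OF x(1)] slackness_gap_primal_dual[OF x(2)])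
  also have "\<dots> = 0"
    using gap_zero[OF x(1) \<beta>(1)] gap_zero[OF x(2) \<beta>(2)] assms(3,4) by simp
  finally have "slackness_gap Dn Fc l Cap x1 \<beta>2 = 0"
    using gap_nonneg[OF x(1) \<beta>(2)] gap_nonneg[OF x(2) \<beta>(1)] by linarith
  then show ?thesis using gap_zero[OF x(1) \<beta>(2)] by simp
qed

lemma equilibrium_min_prices:
  assumes "equilibrium Dn Fc l Dem Cap x \<beta>1" "equilibrium Dn Fc l Dem Cap x \<beta>2"
  shows "equilibrium Dn Fc l Dem Cap x (\<lambda>j. min (\<beta>1 j) (\<beta>2 j))"
  unfolding equilibrium_def
proof (intro conjI ballI impI)
  show "assignment Dn Fc Dem Cap x" using assms(1) unfolding equilibrium_def by blast
next
  fix j assume "j \<in> Fc"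
  then show "0 \<le> min (\<beta>1 j) (\<beta>2 j)" using assms unfolding equilibrium_def by auto
next
  fix i j j' assume "i \<in> Dn" "j \<in> Fc" "0 < x i j" "j' \<in> Fc"
  then have "l i j + \<beta>1 j \<le> l i j' + \<beta>1 j'" "l i j + \<beta>2 j \<le> l i j' + \<beta>2 j'"
    using assms unfolding equilibrium_def by blast+
  then show "l i j + min (\<beta>1 j) (\<beta>2 j) \<le> l i j' + min (\<beta>1 j') (\<beta>2 j')"
    by (auto simp: min_def)
next
  fix j assume "j \<in> Fc" "(\<Sum>i\<in>Dn. x i j) < Cap j"
  then show "min (\<beta>1 j) (\<beta>2 j) = 0" using assms unfolding equilibrium_def by force
qed

lemma min_delay_equilibrium_node_delay_eq:
  assumes "finite Dn" "finite Fc" "\<forall>i\<in>Dn. Dem i > 0"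
    and "min_delay_equilibrium Dn Fc l Dem Cap x \<beta>"
    and "equilibrium Dn Fc l Dem Cap x' \<beta>'" "\<forall>j\<in>Fc. \<beta>' j \<le> \<beta> j"
  shows "\<forall>i\<in>Dn. node_delay Fc l \<beta> i = node_delay Fc l \<beta>' i"
proof -
  define excess where "excess i = Dem i * (node_delay Fc l \<beta> i - node_delay Fc l \<beta>' i)" for i
  have excess_nonneg: "\<forall>i\<in>Dn. excess i \<ge> 0"
    using node_delay_mono[OF assms(2,6), of l] assms(3) by (simp add: excess_def less_imp_le)
  have "total_delay Dn Fc l Dem \<beta> \<le> total_delay Dn Fc l Dem \<beta>'"
    using assms(4,5) unfolding min_delay_equilibrium_def by blast
  then have "(\<Sum>i\<in>Dn. excess i) \<le> 0"
    by (simp add: excess_def total_delay_def right_diff_distrib sum_subtractf)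
  moreover have "0 \<le> (\<Sum>i\<in>Dn. excess i)" using excess_nonneg by (simp add: sum_nonneg)
  ultimately have "\<forall>i\<in>Dn. excess i = 0"
    using sum_nonneg_eq_0_iff[OF assms(1), of excess] excess_nonneg by simp
  then show ?thesis using assms(3) by (fastforce simp: excess_def)
qed

theorem corollary3p5:
  fixes Dn :: "'d set" and Fc :: "'f set"
    and l :: "'d \<Rightarrow> 'f \<Rightarrow> real" and Dem :: "'d \<Rightarrow> real" and Cap :: "'f \<Rightarrow> real"
    and x1 x2 :: "'d \<Rightarrow> 'f \<Rightarrow> real" and \<beta>1 \<beta>2 :: "'f \<Rightarrow> real"
  assumes "instance_ok Dn Fc l Dem Cap"
    and "\<forall>i\<in>Dn. Dem i > 0"
    and "min_delay_equilibrium Dn Fc l Dem Cap x1 \<beta>1"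
    and "min_delay_equilibrium Dn Fc l Dem Cap x2 \<beta>2"
  shows "\<forall>i\<in>Dn. node_delay Fc l \<beta>1 i = node_delay Fc l \<beta>2 i"
proof -
  have finite: "finite Dn" "finite Fc" using assms(1) unfolding instance_ok_def by auto
  have eq1: "equilibrium Dn Fc l Dem Cap x1 \<beta>1" and eq2: "equilibrium Dn Fc l Dem Cap x2 \<beta>2"
    using assms(3,4) unfolding min_delay_equilibrium_def by blast+
  define \<beta>3 where "\<beta>3 j = min (\<beta>1 j) (\<beta>2 j)" for j
  have "equilibrium Dn Fc l Dem Cap x1 \<beta>3"
    unfolding \<beta>3_def
    by (intro equilibrium_min_prices eq1 equilibrium_exchange_prices[OF finite eq1 eq2])
  then have "\<forall>i\<in>Dn. node_delay Fc l \<beta>k i = node_delay Fc l \<beta>3 i"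
    if "min_delay_equilibrium Dn Fc l Dem Cap xk \<beta>k" "\<forall>j\<in>Fc. \<beta>3 j \<le> \<beta>k j" for xk \<beta>k
    using min_delay_equilibrium_node_delay_eq[OF finite assms(2) that(1) _ that(2)] by blast
  from this[OF assms(3)] this[OF assms(4)] show ?thesis by (simp add: \<beta>3_def)
qed

end
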